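(* Every $F_2$-free split graph is hereditarily connected-domishold.
   Context: A graph is split if its vertex set can be partitioned into a clique and an independent set. $F_2$ is the graph obtained from $K_4$ on $\{a,b,c,d\}$ by adding a new vertex adjacent exactly to $a$ and $b$ and another new vertex adjacent exactly to $c$ and $d$. A connected dominating set of a connected graph $G$ is a set $S\subseteq V(G)$ such that every vertex outside $S$ has a neighbor in $S$ and $G[S]$ is connected; $G$ is connected-domishold if there exist $w:V(G)\to\mathbb{R}_{\ge0}$, $t\in\mathbb{R}_{\ge0}$ with $\sum_{x\in S}w(x)\ge t$ iff $S$ is a connected dominating set, for all $S$; disconnected graphs are connected-domishold by convention. $G$ is hereditarily connected-domishold if every induced subgraph is connected-domishold. *)

theory Defs
  imports Complex_Main
begin

text \<open>A finite simple graph is given by a vertex set V and an adjacency relation E,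
  symmetric and irreflexive; only edges between vertices of V matter.\<close>

definition simple_graph :: "'a set \<Rightarrow> ('a \<Rightarrow> 'a \<Rightarrow> bool) \<Rightarrow> bool" where
  "simple_graph V E \<longleftrightarrow> finite V \<and> (\<forall>x y. E x y \<longrightarrow> E y x) \<and> (\<forall>x. \<not> E x x)"

text \<open>Connectedness of the induced subgraph on a vertex set S (the null graph is not connected).\<close>
definition connected_on :: "'a set \<Rightarrow> ('a \<Rightarrow> 'a \<Rightarrow> bool) \<Rightarrow> bool" where
  "connected_on S E \<longleftrightarrow> S \<noteq> {} \<and>
     (\<forall>x\<in>S. \<forall>y\<in>S. (\<lambda>a b. a \<in> S \<and> b \<in> S \<and> E a b)\<^sup>*\<^sup>* x y)"

definition is_clique :: "'a set \<Rightarrow> ('a \<Rightarrow> 'a \<Rightarrow> bool) \<Rightarrow> bool" where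
  "is_clique K E \<longleftrightarrow> (\<forall>x\<in>K. \<forall>y\<in>K. x \<noteq> y \<longrightarrow> E x y)"

definition is_independent :: "'a set \<Rightarrow> ('a \<Rightarrow> 'a \<Rightarrow> bool) \<Rightarrow> bool" where
  "is_independent I E \<longleftrightarrow> (\<forall>x\<in>I. \<forall>y\<in>I. \<not> E x y)"

definition split_graph :: "'a set \<Rightarrow> ('a \<Rightarrow> 'a \<Rightarrow> bool) \<Rightarrow> bool" where
  "split_graph V E \<longleftrightarrow> (\<exists>K I. K \<inter> I = {} \<and> K \<union> I = V \<and> is_clique K E \<and> is_independent I E)"

text \<open>F_2 on vertices 0..5: K4 on a=0,b=1,c=2,d=3; vertex 4 adjacent to 0,1; vertex 5 adjacent to 2,3.\<close>
definition F2_edge :: "nat \<Rightarrow> nat \<Rightarrow> bool" where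
  "F2_edge i j \<longleftrightarrow> i \<noteq> j \<and>
     ((i < 4 \<and> j < 4) \<or> ({i, j} = {4, 0}) \<or> ({i, j} = {4, 1}) \<or>
      ({i, j} = {5, 2}) \<or> ({i, j} = {5, 3}))"

definition contains_induced_F2 :: "'a set \<Rightarrow> ('a \<Rightarrow> 'a \<Rightarrow> bool) \<Rightarrow> bool" where
  "contains_induced_F2 V E \<longleftrightarrow> (\<exists>f :: nat \<Rightarrow> 'a. inj_on f {0..<6} \<and> f ` {0..<6} \<subseteq> V \<and>
     (\<forall>i\<in>{0..<6}. \<forall>j\<in>{0..<6}. E (f i) (f j) \<longleftrightarrow> F2_edge i j))"

definition F2_free :: "'a set \<Rightarrow> ('a \<Rightarrow> 'a \<Rightarrow> bool) \<Rightarrow> bool" where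
  "F2_free V E \<longleftrightarrow> \<not> contains_induced_F2 V E"

definition connected_dominating_set :: "'a set \<Rightarrow> ('a \<Rightarrow> 'a \<Rightarrow> bool) \<Rightarrow> 'a set \<Rightarrow> bool" where
  "connected_dominating_set V E S \<longleftrightarrow> S \<subseteq> V \<and> (\<forall>v\<in>V - S. \<exists>u\<in>S. E v u) \<and> connected_on S E"

definition connected_domishold :: "'a set \<Rightarrow> ('a \<Rightarrow> 'a \<Rightarrow> bool) \<Rightarrow> bool" where
  "connected_domishold V E \<longleftrightarrow> \<not> connected_on V E \<or>
     (\<exists>(w :: 'a \<Rightarrow> real) (t :: real). (\<forall>x\<in>V. w x \<ge> 0) \<and> t \<ge> 0 \<and>
        (\<forall>S. S \<subseteq> V \<longrightarrow> (sum w S \<ge> t \<longleftrightarrow> connected_dominating_set V E S)))"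

definition hereditarily_connected_domishold :: "'a set \<Rightarrow> ('a \<Rightarrow> 'a \<Rightarrow> bool) \<Rightarrow> bool" where
  "hereditarily_connected_domishold V E \<longleftrightarrow> (\<forall>U. U \<subseteq> V \<longrightarrow> connected_domishold U E)"

end

theory Submission
  imports Defs
begin

text \<open>In a split graph with clique \<open>K\<close> and independent set \<open>I\<close> that is not itself a clique,
  a set \<open>S\<close> is a connected dominating set exactly when \<open>S \<inter> K\<close> meets the neighbourhood
  \<open>N(i) \<inter> K\<close> of every \<open>i \<in> I\<close>. So the graph is connected-domishold as soon as the hypergraph
  of these neighbourhoods is threshold, i.e. a set contains an edge iff its weight reaches a
  threshold. An induced \<open>F\<^sub>2\<close> is exactly a pair \<open>i, j \<in> I\<close> whose neighbourhoods both have
  two private vertices, so for an \<open>F\<^sub>2\<close>-free graph any two edges differ on one side in at most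
  one vertex. Such hypergraphs are threshold: among the minimal edges there is a vertex \<open>z\<close>
  with \<open>a - {z} \<subseteq> b\<close> whenever \<open>z \<in> a\<close> and \<open>z \<notin> b\<close>, so the edges through \<open>z\<close> (minus \<open>z\<close>)
  live on a set \<open>U\<close> contained in every edge avoiding \<open>z\<close>, and the threshold realizations of
  the two parts, obtained by induction, can be glued. Induced subgraphs of \<open>F\<^sub>2\<close>-free split
  graphs are again \<open>F\<^sub>2\<close>-free split graphs.\<close>

section \<open>Threshold functions\<close>

definition threshold_function :: "'a set \<Rightarrow> ('a set \<Rightarrow> bool) \<Rightarrow> bool" where
  "threshold_function G P \<longleftrightarrow> (\<exists>(w :: 'a \<Rightarrow> nat) t. \<forall>X \<subseteq> G. P X \<longleftrightarrow> t \<le> sum w X)"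

lemma threshold_functionI:
  fixes w :: "'a \<Rightarrow> nat"
  assumes "\<And>X. X \<subseteq> G \<Longrightarrow> P X \<longleftrightarrow> t \<le> sum w X"
  shows "threshold_function G P"
  unfolding threshold_function_def by (rule exI[where x = w], rule exI[where x = t]) (use assms in auto)

lemma threshold_functionE:
  assumes "threshold_function G P"
  obtains w :: "'a \<Rightarrow> nat" and t where "\<And>X. X \<subseteq> G \<Longrightarrow> P X \<longleftrightarrow> t \<le> sum w X"
  using assms unfolding threshold_function_def by auto

lemma threshold_function_cong:
  "threshold_function G P \<Longrightarrow> (\<And>X. X \<subseteq> G \<Longrightarrow> P X \<longleftrightarrow> Q X) \<Longrightarrow> threshold_function G Q"
  unfolding threshold_function_def by (metis (no_types, lifting))

text \<open>Scaling by \<open>N > card G\<close> and adding \<open>1\<close> to every weight keeps the realized function.\<close>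
lemma threshold_function_positive_weights:
  assumes "finite G" and "threshold_function G P"
  obtains w :: "'a \<Rightarrow> nat" and t where "\<And>x. 1 \<le> w x" and "\<And>X. X \<subseteq> G \<Longrightarrow> P X \<longleftrightarrow> t \<le> sum w X"
proof -
  obtain w :: "'a \<Rightarrow> nat" and t where wt: "\<And>X. X \<subseteq> G \<Longrightarrow> P X \<longleftrightarrow> t \<le> sum w X"
    using assms(2) by (metis threshold_functionE)
  define N where "N = card G + 1"
  have "1 \<le> N * w x + 1" for x by simp
  moreover have "P X \<longleftrightarrow> N * t \<le> sum (\<lambda>x. N * w x + 1) X" if X: "X \<subseteq> G" for X
  proof -
    have sum_eq: "sum (\<lambda>x. N * w x + 1) X = N * sum w X + card X"
      unfolding sum.distrib sum_distrib_left by simp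
    have "card X < N" using card_mono[OF assms(1) X] unfolding N_def by simp
    show ?thesis
    proof
      assume "P X"
      then have "N * t \<le> N * sum w X" using wt[OF X] by simp
      then show "N * t \<le> sum (\<lambda>x. N * w x + 1) X" unfolding sum_eq by linarith
    next
      assume le: "N * t \<le> sum (\<lambda>x. N * w x + 1) X"
      show "P X"
      proof (rule ccontr)
        assume "\<not> P X"
        then have "sum w X + 1 \<le> t" using wt[OF X] by simp
        then have "N * sum w X + N \<le> N * t" using mult_le_mono2[of "sum w X + 1" t N] by simp
        then show False using le \<open>card X < N\<close> unfolding sum_eq by linarith
      qed
    qed
  qed
  ultimately show thesis by (rule that)
qed

lemma threshold_function_dual:
  assumes "finite G" and "threshold_function G P"
  shows "threshold_function G (\<lambda>X. \<not> P (G - X))"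
proof -
  obtain w :: "'a \<Rightarrow> nat" and t where wt: "\<And>X. X \<subseteq> G \<Longrightarrow> P X \<longleftrightarrow> t \<le> sum w X"
    using assms(2) by (metis threshold_functionE)
  show ?thesis
  proof (rule threshold_functionI[where t = "sum w G + 1 - t" and w = w])
    fix X assume "X \<subseteq> G"
    then have "sum w G = sum w (G - X) + sum w X" using assms(1) by (metis sum.subset_diff)
    moreover have "P (G - X) \<longleftrightarrow> t \<le> sum w (G - X)" using wt by blast
    ultimately show "\<not> P (G - X) \<longleftrightarrow> sum w G + 1 - t \<le> sum w X" by arith
  qed
qed

text \<open>\<open>s1\<close>, \<open>s2\<close> are the weights of a set on the two parts, \<open>W1\<close> is the total weight of the
  first part, and \<open>c\<close> exceeds every weight on the second part, so a missing vertex of the first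
  part cannot be compensated.\<close>
lemma glued_threshold_inequality:
  fixes c W1 t1 t2 s1 s2 :: nat
  assumes t1: "t1 \<le> W1" and s2: "s2 < c" and full: "full \<Longrightarrow> s1 = W1" and not_full: "\<not> full \<Longrightarrow> s1 < W1"
  shows "(with_z \<and> t1 \<le> s1 \<or> full \<and> t2 \<le> s2) \<longleftrightarrow>
    c * W1 + t2 \<le> (if with_z then c * W1 + t2 - c * t1 else 0) + c * s1 + s2"
proof -
  have scale: "c * a \<le> c * b" if "a \<le> b" for a b using that by simp
  have scale_lt: "c * a + c \<le> c * b" if "a < b" for a b using scale[of "a + 1" b] that by simp
  have "c * t1 \<le> c * W1" using scale[OF t1] .
  show ?thesis
  proof (cases with_z)
    case True
    show ?thesis
    proof (cases "t1 \<le> s1")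
      case le: True
      have "c * W1 + t2 \<le> c * W1 + t2 - c * t1 + c * s1 + s2"
        using scale[OF le] \<open>c * t1 \<le> c * W1\<close> by linarith
      then show ?thesis using True le by simp
    next
      case False
      have "c * s1 + c \<le> c * t1" using False by (intro scale_lt) simp
      then have "\<not> c * W1 + t2 \<le> c * W1 + t2 - c * t1 + c * s1 + s2"
        using \<open>c * t1 \<le> c * W1\<close> s2 by linarith
      moreover have "\<not> full" using full t1 False by auto
      ultimately show ?thesis using True False by simp
    qed
  next
    case False
    show ?thesis
    proof (cases full)
      case True
      then show ?thesis using False full by simp
    next
      case not: False
      have "c * s1 + c \<le> c * W1" using not_full[OF not] by (rule scale_lt)
      then have "\<not> c * W1 + t2 \<le> c * s1 + s2" using s2 by linarith
      then show ?thesis using False not by simp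
    qed
  qed
qed

text \<open>The weight of \<open>z\<close> lets \<open>z\<close> together with a \<open>P1\<close>-set reach the threshold, while the factor
  \<open>c\<close> lets any missing vertex of \<open>U\<close> outweigh all of \<open>G\<close>.\<close>
lemma threshold_function_join:
  assumes fin: "finite U" "finite G" and z: "z \<notin> U" "z \<notin> G" and disj: "U \<inter> G = {}"
    and th1: "threshold_function U P1" and top: "P1 U"
    and th2: "threshold_function G P2"
  shows "threshold_function (insert z (U \<union> G)) (\<lambda>X. z \<in> X \<and> P1 (X \<inter> U) \<or> U \<subseteq> X \<and> P2 (X \<inter> G))"
proof -
  obtain w1 :: "'a \<Rightarrow> nat" and t1 where pos: "\<And>x. 1 \<le> w1 x"
    and wt1: "\<And>X. X \<subseteq> U \<Longrightarrow> P1 X \<longleftrightarrow> t1 \<le> sum w1 X"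
    using fin(1) th1 by (metis threshold_function_positive_weights)
  obtain w2 :: "'a \<Rightarrow> nat" and t2 where wt2: "\<And>X. X \<subseteq> G \<Longrightarrow> P2 X \<longleftrightarrow> t2 \<le> sum w2 X"
    using th2 by (metis threshold_functionE)
  define c where "c = sum w2 G + 1"
  define T where "T = c * sum w1 U + t2"
  define w where "w = (\<lambda>v. if v = z then T - c * t1 else if v \<in> U then c * w1 v else w2 v)"
  show ?thesis
  proof (rule threshold_functionI[where t = T and w = w])
    fix X assume X: "X \<subseteq> insert z (U \<union> G)"
    have "finite X" using X fin finite_subset by blast
    then have "sum w X = sum w (X \<inter> {z}) + sum w (X - {z})" by (rule sum.Int_Diff)
    also have "X - {z} = (X \<inter> U) \<union> (X \<inter> G)" using X z by blast
    also have "sum w \<dots> = sum w (X \<inter> U) + sum w (X \<inter> G)"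
      using fin disj by (intro sum.union_disjoint) auto
    also have "sum w (X \<inter> {z}) = (if z \<in> X then T - c * t1 else 0)"
      by (simp add: w_def Int_insert_right)
    also have "sum w (X \<inter> U) = c * sum w1 (X \<inter> U)"
      unfolding sum_distrib_left using z by (intro sum.cong) (auto simp: w_def)
    also have "sum w (X \<inter> G) = sum w2 (X \<inter> G)"
      using z disj by (intro sum.cong) (auto simp: w_def)
    finally have "sum w X = (if z \<in> X then T - c * t1 else 0) + c * sum w1 (X \<inter> U) + sum w2 (X \<inter> G)"
      by simp
    moreover have "t1 \<le> sum w1 U" using wt1 top by blast
    moreover have "sum w2 (X \<inter> G) < c" unfolding c_def using fin(2) by (simp add: le_imp_less_Suc sum_mono2)
    moreover have "sum w1 (X \<inter> U) = sum w1 U" if "U \<subseteq> X" using that by (simp add: Int_absorb1)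
    moreover have "sum w1 (X \<inter> U) < sum w1 U" if "\<not> U \<subseteq> X"
    proof -
      from that obtain u where "u \<in> U - X \<inter> U" by blast
      then show ?thesis using fin(1) pos
        by (intro sum_strict_mono2) (auto simp: less_le_trans[OF zero_less_one])
    qed
    ultimately show "(z \<in> X \<and> P1 (X \<inter> U) \<or> U \<subseteq> X \<and> P2 (X \<inter> G)) \<longleftrightarrow> T \<le> sum w X"
      using glued_threshold_inequality[of t1 "sum w1 U" "sum w2 (X \<inter> G)" c "U \<subseteq> X" "sum w1 (X \<inter> U)"
          "z \<in> X" t2] wt1[of "X \<inter> U"] wt2[of "X \<inter> G"]
      unfolding T_def by simp
  qed
qed


section \<open>Almost comparable hypergraphs are threshold\<close>

text \<open>For an antichain of sets this is the 1-Sperner property of Boros, Gurvich and Milanic.\<close>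
definition almost_comparable :: "'a set set \<Rightarrow> bool" where
  "almost_comparable H \<longleftrightarrow> (\<forall>A\<in>H. \<forall>B\<in>H. card (A - B) \<le> 1 \<or> card (B - A) \<le> 1)"

lemma almost_comparable_subset:
  "almost_comparable H \<Longrightarrow> H' \<subseteq> H \<Longrightarrow> almost_comparable H'"
  unfolding almost_comparable_def by blast

lemma almost_comparable_image_Diff:
  assumes "almost_comparable H" and "\<forall>A\<in>H. finite A"
  shows "almost_comparable ((\<lambda>A. A - C) ` H)"
  unfolding almost_comparable_def
proof (intro ballI)
  fix A' B' assume "A' \<in> (\<lambda>A. A - C) ` H" "B' \<in> (\<lambda>A. A - C) ` H"
  then obtain A B where AB: "A \<in> H" "B \<in> H" "A' = A - C" "B' = B - C" by blast
  have "card (A' - B') \<le> card (A - B)" "card (B' - A') \<le> card (B - A)"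
    using AB assms(2) by (auto intro: card_mono)
  moreover have "card (A - B) \<le> 1 \<or> card (B - A) \<le> 1"
    using assms(1) AB unfolding almost_comparable_def by blast
  ultimately show "card (A' - B') \<le> 1 \<or> card (B' - A') \<le> 1" by linarith
qed

lemma almost_comparableD:
  assumes "almost_comparable H" "A \<in> H" "B \<in> H" "finite A" "finite B"
  shows "(\<forall>x\<in>A - B. \<forall>y\<in>A - B. x = y) \<or> (\<forall>x\<in>B - A. \<forall>y\<in>B - A. x = y)"
  using assms card_le_Suc0_iff_eq[of "A - B"] card_le_Suc0_iff_eq[of "B - A"]
  unfolding almost_comparable_def by auto

definition minimal_edges :: "'a set set \<Rightarrow> 'a set set" where
  "minimal_edges H = {A \<in> H. \<forall>B\<in>H. B \<subseteq> A \<longrightarrow> B = A}"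

lemma minimal_edges_subset: "minimal_edges H \<subseteq> H"
  unfolding minimal_edges_def by blast

lemma minimal_edges_antichain:
  "A \<in> minimal_edges H \<Longrightarrow> B \<in> minimal_edges H \<Longrightarrow> A \<subseteq> B \<Longrightarrow> A = B"
  unfolding minimal_edges_def by blast

lemma ex_minimal_edge_subset:
  assumes "A \<in> H" and "finite A"
  shows "\<exists>B\<in>minimal_edges H. B \<subseteq> A"
proof -
  have "finite {B \<in> H. B \<subseteq> A}" using finite_subset[of _ "Pow A"] assms(2) by auto
  then obtain B where B: "B \<in> H" "B \<subseteq> A" and min: "\<forall>C\<in>{B \<in> H. B \<subseteq> A}. C \<subseteq> B \<longrightarrow> B = C"
    using finite_has_minimal2[of "{B \<in> H. B \<subseteq> A}" A] assms(1) by auto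
  have "B \<in> minimal_edges H" unfolding minimal_edges_def using B min by auto
  then show ?thesis using B(2) by blast
qed

lemma contains_edge_iff_contains_minimal_edge:
  assumes "\<And>A. A \<in> H \<Longrightarrow> finite A"
  shows "(\<exists>A\<in>H. A \<subseteq> X) \<longleftrightarrow> (\<exists>A\<in>minimal_edges H. A \<subseteq> X)"
  using ex_minimal_edge_subset[OF _ assms] minimal_edges_subset by (meson order_trans subsetD)

context
  fixes M :: "'a set set"
  assumes finite_edges: "\<And>A. A \<in> M \<Longrightarrow> finite A"
    and antichain: "\<And>A B. A \<in> M \<Longrightarrow> B \<in> M \<Longrightarrow> A \<subseteq> B \<Longrightarrow> A = B"
    and almost: "almost_comparable M"
begin

lemma singleton_Diff_if_two_outside:
  assumes "A \<in> M" "B \<in> M" "x \<in> A - B" "x' \<in> A - B" "x \<noteq> x'" "y \<in> B - A"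
  shows "B - A = {y}"
  using almost_comparableD[OF almost assms(1,2) finite_edges[OF assms(1)] finite_edges[OF assms(2)]] assms(3-6)
  by blast

lemma card_Diff_min_edge:
  assumes f0: "f0 \<in> M" "\<And>g. g \<in> M \<Longrightarrow> card f0 \<le> card g" and g: "g \<in> M" "g \<noteq> f0"
  shows "card (f0 - g) = 1"
proof -
  have "f0 - g \<noteq> {}" using antichain[OF f0(1) g(1)] g(2) by blast
  moreover have "g - f0 \<noteq> {}" using antichain[OF g(1) f0(1)] g(2) by blast
  ultimately have "card (f0 - g) \<ge> 1" "card (g - f0) \<ge> 1"
    using finite_edges f0(1) g(1) by (auto simp: Suc_le_eq card_gt_0_iff)
  moreover have "card f0 = card (f0 \<inter> g) + card (f0 - g)" "card g = card (f0 \<inter> g) + card (g - f0)"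
    using card_Int_Diff[OF finite_edges[OF f0(1)], of g] card_Int_Diff[OF finite_edges[OF g(1)], of f0]
    by (simp_all add: Int_commute)
  moreover have "card (f0 - g) \<le> 1 \<or> card (g - f0) \<le> 1"
    using almost f0(1) g(1) unfolding almost_comparable_def by blast
  ultimately show ?thesis using f0(2)[OF g(1)] by linarith
qed

lemma card_edge_min_edge:
  assumes f0: "f0 \<in> M" "\<And>g. g \<in> M \<Longrightarrow> card f0 \<le> card g" and g: "g \<in> M" "g \<noteq> f0"
  shows "card g + 1 = card f0 + card (g - f0)"
  using card_Int_Diff[OF finite_edges[OF f0(1)], of g] card_Int_Diff[OF finite_edges[OF g(1)], of f0]
    card_Diff_min_edge[OF f0 g] by (simp add: Int_commute)

context
  fixes f0 e z
  assumes f0: "f0 \<in> M" "\<And>g. g \<in> M \<Longrightarrow> card f0 \<le> card g"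
    and e: "e \<in> M" "e \<noteq> f0" "\<And>g. g \<in> M \<Longrightarrow> g \<noteq> f0 \<Longrightarrow> card g \<le> card e"
    and z: "f0 - e = {z}"
begin

lemma Diff_min_edge_subset_max_edge:
  assumes a: "a \<in> M" "a \<noteq> f0" "z \<in> a" and y: "f0 - a = {y}"
  shows "a - f0 \<subseteq> e"
proof -
  have "y \<in> e - a" using y z a(3) by auto
  consider "\<forall>u\<in>a - e. \<forall>v\<in>a - e. u = v" | "\<forall>u\<in>e - a. \<forall>v\<in>e - a. u = v"
    using almost_comparableD[OF almost a(1) e(1) finite_edges[OF a(1)] finite_edges[OF e(1)]] by blast
  then show ?thesis
  proof cases
    case 1
    then have "a - e \<subseteq> {z}" using a(3) z by auto
    then show ?thesis using z by auto
  next
    case 2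
    then have sub: "e - f0 \<subseteq> a - f0" using \<open>y \<in> e - a\<close> y by auto
    have "card a \<le> card e" using e(3) a(1,2) .
    then have "card (a - f0) \<le> card (e - f0)"
      using card_edge_min_edge[OF f0 a(1,2)] card_edge_min_edge[OF f0 e(1,2)] by linarith
    moreover have "finite (a - f0)" using finite_edges[OF a(1)] by simp
    ultimately have "e - f0 = a - f0" using card_subset_eq[OF _ sub] card_mono[OF _ sub] by simp
    then show ?thesis by blast
  qed
qed

lemma pivot_property:
  assumes a: "a \<in> M" "z \<in> a" and b: "b \<in> M" "z \<notin> b"
  shows "a - {z} \<subseteq> b"
proof
  fix x assume x: "x \<in> a - {z}"
  have "z \<in> f0" using z by blast
  then have "f0 - b = {z}"
    using card_Diff_min_edge[OF f0 b(1)] b(2) finite_edges[OF f0(1)] by (metis DiffI card_1_singletonE singletonD)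
  then have f0_b: "f0 - {z} \<subseteq> b" by blast
  show "x \<in> b"
  proof (rule ccontr)
    assume "x \<notin> b"
    then have "x \<notin> f0" using f0_b x by blast
    then have "a \<noteq> f0" using x by blast
    then obtain y where y: "f0 - a = {y}"
      using card_Diff_min_edge[OF f0 a(1)] by (metis card_1_singletonE)
    then have "y \<in> b - a" using f0_b a(2) by blast
    then have "b - a = {y}"
      using singleton_Diff_if_two_outside[OF a(1) b(1), of z x] a(2) b(2) x \<open>x \<notin> b\<close> by blast
    have a_e: "a - f0 \<subseteq> e" using Diff_min_edge_subset_max_edge[OF a(1) \<open>a \<noteq> f0\<close> a(2) y] .
    have "b \<subseteq> e"
    proof
      fix v assume "v \<in> b"
      show "v \<in> e"
      proof (cases "v \<in> f0")
        case True
        then show ?thesis using z b(2) \<open>v \<in> b\<close> by (metis DiffI singletonD)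
      next
        case False
        then show ?thesis using \<open>b - a = {y}\<close> y a_e \<open>v \<in> b\<close> by blast
      qed
    qed
    then have "b = e" using antichain[OF b(1) e(1)] by blast
    then show False using a_e x \<open>x \<notin> b\<close> \<open>x \<notin> f0\<close> by blast
  qed
qed

end

lemma ex_pivot_vertex:
  assumes "finite M" "M \<noteq> {}" "{} \<notin> M"
  obtains z where "z \<in> \<Union>M" and "\<And>a b. a \<in> M \<Longrightarrow> b \<in> M \<Longrightarrow> z \<in> a \<Longrightarrow> z \<notin> b \<Longrightarrow> a - {z} \<subseteq> b"
proof -
  obtain f0 where f0: "f0 \<in> M" "\<And>g. g \<in> M \<Longrightarrow> card f0 \<le> card g"
    using ex_is_arg_min_if_finite[OF assms(1,2), of card] unfolding is_arg_min_linorder by blast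
  show thesis
  proof (cases "M = {f0}")
    case True
    then obtain z where "z \<in> f0" using assms(3) f0(1) by blast
    then show thesis using that True f0(1) by blast
  next
    case False
    then have "card ` (M - {f0}) \<noteq> {}" using f0(1) by blast
    then obtain e where "e \<in> M - {f0}" "card e = Max (card ` (M - {f0}))"
      using Max_in[of "card ` (M - {f0})"] assms(1) by (metis finite_Diff finite_imageI imageE)
    then have e: "e \<in> M" "e \<noteq> f0" "\<And>g. g \<in> M \<Longrightarrow> g \<noteq> f0 \<Longrightarrow> card g \<le> card e"
      using assms(1) by simp_all
    then obtain z where z: "f0 - e = {z}"
      using card_Diff_min_edge[OF f0 e(1,2)] by (metis card_1_singletonE)
    have "z \<in> \<Union>M" using z f0(1) by blast
    then show thesis using that pivot_property[OF f0 e z] by blast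
  qed
qed

end

lemma threshold_function_pivot_split:
  assumes fin: "finite G" and edges: "\<forall>A\<in>M. A \<subseteq> G" and zM: "z \<in> \<Union>M"
    and pivot: "\<And>a b. a \<in> M \<Longrightarrow> b \<in> M \<Longrightarrow> z \<in> a \<Longrightarrow> z \<notin> b \<Longrightarrow> a - {z} \<subseteq> b"
    and U: "U = \<Union>((\<lambda>a. a - {z}) ` {a \<in> M. z \<in> a})"
    and th1: "threshold_function U (\<lambda>X. \<exists>A\<in>(\<lambda>a. a - {z}) ` {a \<in> M. z \<in> a}. A \<subseteq> X)"
    and th2: "threshold_function (G - insert z U) (\<lambda>X. \<exists>B\<in>(\<lambda>b. b - U) ` {b \<in> M. z \<notin> b}. B \<subseteq> X)"
  shows "threshold_function G (\<lambda>X. \<exists>A\<in>M. A \<subseteq> X)"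
proof -
  have "z \<in> G" "U \<subseteq> G" "z \<notin> U" using zM edges unfolding U by blast+
  then have G: "insert z (U \<union> (G - insert z U)) = G" by blast
  have "\<exists>A\<in>(\<lambda>a. a - {z}) ` {a \<in> M. z \<in> a}. A \<subseteq> U" using zM unfolding U by blast
  then have "threshold_function (insert z (U \<union> (G - insert z U)))
    (\<lambda>X. z \<in> X \<and> (\<exists>A\<in>(\<lambda>a. a - {z}) ` {a \<in> M. z \<in> a}. A \<subseteq> X \<inter> U)
       \<or> U \<subseteq> X \<and> (\<exists>B\<in>(\<lambda>b. b - U) ` {b \<in> M. z \<notin> b}. B \<subseteq> X \<inter> (G - insert z U)))"
    using fin \<open>U \<subseteq> G\<close> \<open>z \<notin> U\<close> th1 th2 by (intro threshold_function_join) (auto intro: finite_subset)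
  then show ?thesis unfolding G
  proof (rule threshold_function_cong)
    fix X assume "X \<subseteq> G"
    show "(z \<in> X \<and> (\<exists>A\<in>(\<lambda>a. a - {z}) ` {a \<in> M. z \<in> a}. A \<subseteq> X \<inter> U)
       \<or> U \<subseteq> X \<and> (\<exists>B\<in>(\<lambda>b. b - U) ` {b \<in> M. z \<notin> b}. B \<subseteq> X \<inter> (G - insert z U)))
      \<longleftrightarrow> (\<exists>A\<in>M. A \<subseteq> X)" (is "?split \<longleftrightarrow> _")
    proof
      assume ?split
      then show "\<exists>A\<in>M. A \<subseteq> X" by blast
    next
      assume "\<exists>A\<in>M. A \<subseteq> X"
      then obtain A where A: "A \<in> M" "A \<subseteq> X" by blast
      show ?split
      proof (cases "z \<in> A")
        case True
        then have "A - {z} \<subseteq> X \<inter> U" using A unfolding U by blast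
        then show ?split using A True by blast
      next
        case False
        then have "U \<subseteq> A" using pivot A(1) unfolding U by blast
        have "A - U \<subseteq> X \<inter> (G - insert z U)" using A False edges by blast
        moreover have "A - U \<in> (\<lambda>b. b - U) ` {b \<in> M. z \<notin> b}" using A(1) False by blast
        ultimately have "\<exists>B\<in>(\<lambda>b. b - U) ` {b \<in> M. z \<notin> b}. B \<subseteq> X \<inter> (G - insert z U)" by (rule bexI)
        moreover have "U \<subseteq> X" using \<open>U \<subseteq> A\<close> A(2) by (rule order_trans)
        ultimately show ?split by blast
      qed
    qed
  qed
qed

theorem almost_comparable_threshold_function:
  assumes "finite G" and "\<forall>A\<in>H. A \<subseteq> G" and "almost_comparable H"
  shows "threshold_function G (\<lambda>X. \<exists>A\<in>H. A \<subseteq> X)"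
  using assms
proof (induction "card G" arbitrary: G H rule: less_induct)
  case less
  show ?case
  proof (cases "{} \<in> H \<or> H = {}")
    case True
    show ?thesis
      by (rule threshold_functionI[where w = "\<lambda>_. 0" and t = "if {} \<in> H then 0 else 1"]) (use True in auto)
  next
    case False
    define M where "M = minimal_edges H"
    have fin_edges: "\<And>A. A \<in> H \<Longrightarrow> finite A" using less.prems(1,2) finite_subset by blast
    have M_edges: "\<forall>A\<in>M. A \<subseteq> G" and M_fin: "\<And>A. A \<in> M \<Longrightarrow> finite A"
      using less.prems(2) fin_edges minimal_edges_subset unfolding M_def by blast+
    obtain A where "A \<in> H" using False by blast
    then have "M \<noteq> {}" using ex_minimal_edge_subset[OF _ fin_edges] unfolding M_def by blast
    moreover have "finite M" using M_edges less.prems(1) by (meson Pow_iff finite_Pow_iff finite_subset subsetI)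
    moreover have "{} \<notin> M" using False minimal_edges_subset unfolding M_def by blast
    moreover have "\<And>A B. A \<in> M \<Longrightarrow> B \<in> M \<Longrightarrow> A \<subseteq> B \<Longrightarrow> A = B"
      unfolding M_def by (rule minimal_edges_antichain)
    moreover have almost: "almost_comparable M"
      using less.prems(3) minimal_edges_subset unfolding M_def by (rule almost_comparable_subset)
    ultimately obtain z where zM: "z \<in> \<Union>M"
      and pivot: "\<And>a b. a \<in> M \<Longrightarrow> b \<in> M \<Longrightarrow> z \<in> a \<Longrightarrow> z \<notin> b \<Longrightarrow> a - {z} \<subseteq> b"
      using ex_pivot_vertex[OF M_fin] by blast
    define H1 where "H1 = (\<lambda>a. a - {z}) ` {a \<in> M. z \<in> a}"
    define U where "U = \<Union>H1"
    define H2 where "H2 = (\<lambda>b. b - U) ` {b \<in> M. z \<notin> b}"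
    have "z \<in> G" "U \<subseteq> G - {z}" using zM M_edges unfolding U_def H1_def by blast+
    then have "card U < card G" "card (G - insert z U) < card G"
      using less.prems(1) by (auto intro: psubset_card_mono)
    moreover have "finite U" "finite (G - insert z U)"
      using \<open>U \<subseteq> G - {z}\<close> less.prems(1) finite_subset by auto
    moreover have "\<forall>A\<in>H1. A \<subseteq> U" "\<forall>B\<in>H2. B \<subseteq> G - insert z U"
      using M_edges unfolding U_def H1_def H2_def by blast+
    moreover have "almost_comparable H1" "almost_comparable H2"
      unfolding H1_def H2_def using almost M_fin
      by (auto intro!: almost_comparable_image_Diff intro: almost_comparable_subset)
    ultimately have th1: "threshold_function U (\<lambda>X. \<exists>A\<in>H1. A \<subseteq> X)"
      and th2: "threshold_function (G - insert z U) (\<lambda>X. \<exists>B\<in>H2. B \<subseteq> X)"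
      using less.hyps by blast+
    have "threshold_function G (\<lambda>X. \<exists>A\<in>M. A \<subseteq> X)"
      by (rule threshold_function_pivot_split[OF less.prems(1) M_edges zM pivot U_def[unfolded H1_def]
            th1[unfolded H1_def] th2[unfolded H2_def]])
    then show ?thesis unfolding M_def
      by (rule threshold_function_cong) (simp add: contains_edge_iff_contains_minimal_edge[OF fin_edges])
  qed
qed


section \<open>Split graphs\<close>

lemma simple_graph_subset: "simple_graph V E \<Longrightarrow> U \<subseteq> V \<Longrightarrow> simple_graph U E"
  unfolding simple_graph_def using finite_subset by blast

lemma split_graph_subset:
  assumes "split_graph V E" and "U \<subseteq> V"
  shows "split_graph U E"
proof -
  obtain K I where "K \<inter> I = {}" "K \<union> I = V" "is_clique K E" "is_independent I E"
    using assms(1) unfolding split_graph_def by blast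
  then show ?thesis unfolding split_graph_def is_clique_def is_independent_def using assms(2)
    by (intro exI[of _ "K \<inter> U"] exI[of _ "I \<inter> U"]) auto
qed

lemma F2_free_subset: "F2_free V E \<Longrightarrow> U \<subseteq> V \<Longrightarrow> F2_free U E"
  unfolding F2_free_def contains_induced_F2_def by (meson subset_trans)

lemma contains_induced_F2I:
  assumes sym: "\<forall>x y. E x y \<longrightarrow> E y x" and irr: "\<forall>x. \<not> E x x"
    and cl: "is_clique K E" and K: "a \<in> K" "b \<in> K" "c \<in> K" "d \<in> K" "a \<noteq> b" "c \<noteq> d"
    and i: "E i a" "E i b" "\<not> E i c" "\<not> E i d"
    and j: "E j c" "E j d" "\<not> E j a" "\<not> E j b"
    and ij: "\<not> E i j" and U: "{a, b, c, d, i, j} \<subseteq> U"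
  shows "contains_induced_F2 U E"
proof -
  have EK: "E x y" if "x \<in> K" "y \<in> K" "x \<noteq> y" for x y using cl that unfolding is_clique_def by blast
  have distinct: "distinct [a, b, c, d, i, j]" using K i j irr EK by auto
  have edges: "\<not> E a a" "E a b" "E a c" "E a d" "E a i" "\<not> E a j"
    "E b a" "\<not> E b b" "E b c" "E b d" "E b i" "\<not> E b j"
    "E c a" "E c b" "\<not> E c c" "E c d" "\<not> E c i" "E c j"
    "E d a" "E d b" "E d c" "\<not> E d d" "\<not> E d i" "E d j"
    "E i a" "E i b" "\<not> E i c" "\<not> E i d" "\<not> E i i" "\<not> E i j"
    "\<not> E j a" "\<not> E j b" "E j c" "E j d" "\<not> E j i" "\<not> E j j"
    using EK K distinct sym irr i j ij by auto
  define f where "f = (!) [a, b, c, d, i, j]"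
  have six: "{0..<6::nat} = {0, 1, 2, 3, 4, 5}" by auto
  have "inj_on f {0..<6}" unfolding f_def using distinct by (intro inj_on_nth) auto
  moreover have "f ` {0..<6} \<subseteq> U" unfolding six f_def using U by simp
  moreover have "\<forall>p\<in>{0..<6}. \<forall>q\<in>{0..<6}. E (f p) (f q) \<longleftrightarrow> F2_edge p q"
    unfolding six f_def by (simp add: F2_edge_def doubleton_eq_iff edges)
  ultimately show ?thesis unfolding contains_induced_F2_def by blast
qed

lemma almost_comparable_neighbourhoods:
  assumes sym: "\<forall>x y. E x y \<longrightarrow> E y x" and irr: "\<forall>x. \<not> E x x"
    and cl: "is_clique K E" and ind: "is_independent I E" and "finite K" and "K \<union> I \<subseteq> U"
    and F2: "\<not> contains_induced_F2 U E"
  shows "almost_comparable ((\<lambda>i. {k \<in> K. E i k}) ` I)"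
  unfolding almost_comparable_def
proof (intro ballI, rule ccontr)
  fix A B assume "A \<in> (\<lambda>i. {k \<in> K. E i k}) ` I" "B \<in> (\<lambda>i. {k \<in> K. E i k}) ` I"
  then obtain i j where ij: "i \<in> I" "j \<in> I" "A = {k \<in> K. E i k}" "B = {k \<in> K. E j k}" by blast
  assume "\<not> (card (A - B) \<le> 1 \<or> card (B - A) \<le> 1)"
  moreover have "finite (A - B)" "finite (B - A)" using \<open>finite K\<close> unfolding ij by auto
  ultimately obtain a b c d where "a \<in> A - B" "b \<in> A - B" "a \<noteq> b" "c \<in> B - A" "d \<in> B - A" "c \<noteq> d"
    using card_le_Suc0_iff_eq by (metis One_nat_def)
  moreover have "\<not> E i j" using ind ij unfolding is_independent_def by blast
  ultimately have "contains_induced_F2 U E"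
    using ij \<open>K \<union> I \<subseteq> U\<close> by (intro contains_induced_F2I[OF sym irr cl, of a b c d i j]) auto
  then show False using F2 by contradiction
qed

lemma connected_on_clique_hub:
  assumes sym: "\<forall>x y. E x y \<longrightarrow> E y x" and cl: "is_clique K E" and k: "k \<in> S \<inter> K"
    and adj: "\<And>x. x \<in> S - K \<Longrightarrow> \<exists>k'\<in>S \<inter> K. E x k'"
  shows "connected_on S E"
proof -
  let ?R = "\<lambda>a b. a \<in> S \<and> b \<in> S \<and> E a b"
  have edge: "?R\<^sup>*\<^sup>* x y \<and> ?R\<^sup>*\<^sup>* y x" if "x \<in> S" "y \<in> S" "x = y \<or> E x y" for x y
    using that sym by (auto intro: r_into_rtranclp)
  have clique_k: "?R\<^sup>*\<^sup>* x k \<and> ?R\<^sup>*\<^sup>* k x" if "x \<in> S \<inter> K" for x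
    using edge[of x k] that k cl unfolding is_clique_def by blast
  have to_k: "?R\<^sup>*\<^sup>* x k \<and> ?R\<^sup>*\<^sup>* k x" if x: "x \<in> S" for x
  proof (cases "x \<in> K")
    case True
    then show ?thesis using clique_k x by blast
  next
    case False
    then obtain k' where "k' \<in> S \<inter> K" "E x k'" using adj x by blast
    then show ?thesis using edge[of x k'] clique_k[of k'] x by (meson IntD1 rtranclp_trans)
  qed
  show ?thesis unfolding connected_on_def
  proof (intro conjI ballI)
    show "S \<noteq> {}" using k by blast
    fix x y assume "x \<in> S" "y \<in> S"
    then show "?R\<^sup>*\<^sup>* x y" using to_k[of x] to_k[of y] rtranclp_trans[of ?R x k y] by blast
  qed
qed

lemma clique_connected_domishold:
  assumes "finite U" and sym: "\<forall>x y. E x y \<longrightarrow> E y x" and cl: "is_clique U E"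
  shows "connected_domishold U E"
  unfolding connected_domishold_def
proof (intro disjI2 exI[of _ "\<lambda>_. 1"] exI[of _ 1] conjI allI impI)
  fix S assume "S \<subseteq> U"
  have cds: "connected_dominating_set U E S \<longleftrightarrow> S \<noteq> {}"
  proof
    assume "S \<noteq> {}"
    then obtain k where "k \<in> S" by blast
    have "S \<inter> U = S" using \<open>S \<subseteq> U\<close> by blast
    then have "connected_on S E"
      using connected_on_clique_hub[OF sym cl, of k S] \<open>k \<in> S\<close> by blast
    moreover have "\<forall>v\<in>U - S. \<exists>u\<in>S. E v u"
    proof
      fix v assume "v \<in> U - S"
      moreover have "k \<in> U" using \<open>k \<in> S\<close> \<open>S \<subseteq> U\<close> by blast
      ultimately have "E v k" using cl \<open>k \<in> S\<close> unfolding is_clique_def by (metis DiffE)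
      then show "\<exists>u\<in>S. E v u" using \<open>k \<in> S\<close> by blast
    qed
    ultimately show "connected_dominating_set U E S"
      unfolding connected_dominating_set_def using \<open>S \<subseteq> U\<close> by blast
  qed (auto simp: connected_dominating_set_def connected_on_def)
  moreover have nonempty: "S \<noteq> {} \<longleftrightarrow> 1 \<le> sum (\<lambda>_. 1 :: real) S"
    using finite_subset[OF \<open>S \<subseteq> U\<close> \<open>finite U\<close>] by (simp add: Suc_le_eq card_gt_0_iff)
  show "1 \<le> sum (\<lambda>_. 1 :: real) S \<longleftrightarrow> connected_dominating_set U E S" by (simp only: cds nonempty)
qed auto

context
  fixes U K I :: "'a set" and E :: "'a \<Rightarrow> 'a \<Rightarrow> bool"
  assumes sym: "\<forall>x y. E x y \<longrightarrow> E y x"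
    and partition: "K \<inter> I = {}" "K \<union> I = U"
    and clique: "is_clique K E" and independent: "is_independent I E"
    and not_clique: "\<not> is_clique U E"
begin

lemma neighbour_in_clique: "i \<in> I \<Longrightarrow> u \<in> U \<Longrightarrow> E i u \<Longrightarrow> u \<in> K"
  using independent partition unfolding is_independent_def by blast

lemma not_dominated_by_independent_vertex:
  assumes i: "i \<in> I" and adj: "\<And>v. v \<in> U \<Longrightarrow> v \<noteq> i \<Longrightarrow> E v i"
  shows False
proof -
  have in_K: "v \<in> K" if "v \<in> U" "v \<noteq> i" for v
    using neighbour_in_clique[OF i that(1)] adj[OF that] sym by blast
  have "is_clique U E" unfolding is_clique_def
  proof (intro ballI impI)
    fix x y assume xy: "x \<in> U" "y \<in> U" "x \<noteq> y"
    consider "x = i" | "y = i" | "x \<noteq> i" "y \<noteq> i" by blast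
    then show "E x y"
    proof cases
      case 1
      then show ?thesis using adj[of y] xy sym by blast
    next
      case 2
      then show ?thesis using adj[of x] xy by blast
    next
      case 3
      then show ?thesis using in_K xy clique unfolding is_clique_def by blast
    qed
  qed
  then show False using not_clique by contradiction
qed

lemma cds_neighbour_in_clique:
  assumes cds: "connected_dominating_set U E S" and i: "i \<in> I"
  shows "\<exists>k\<in>K \<inter> S. E i k"
proof -
  have "S \<subseteq> U" using cds unfolding connected_dominating_set_def by blast
  have "\<exists>u\<in>S. E i u"
  proof (cases "i \<in> S")
    case False
    then show ?thesis using cds i partition unfolding connected_dominating_set_def by blast
  next
    case True
    have "S \<noteq> {i}"
    proof
      assume "S = {i}"
      then show False
        using cds i not_dominated_by_independent_vertex unfolding connected_dominating_set_def by blast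
    qed
    then obtain y where "y \<in> S" "y \<noteq> i" using True by blast
    then have "(\<lambda>a b. a \<in> S \<and> b \<in> S \<and> E a b)\<^sup>*\<^sup>* i y"
      using cds True unfolding connected_dominating_set_def connected_on_def by blast
    then show ?thesis using \<open>y \<noteq> i\<close> by (cases rule: converse_rtranclpE) auto
  qed
  then show ?thesis using neighbour_in_clique[OF i] \<open>S \<subseteq> U\<close> by blast
qed

lemma cds_iff_clique_neighbours:
  assumes "S \<subseteq> U"
  shows "connected_dominating_set U E S \<longleftrightarrow> (\<forall>i\<in>I. \<exists>k\<in>K \<inter> S. E i k)"
proof
  assume "connected_dominating_set U E S"
  then show "\<forall>i\<in>I. \<exists>k\<in>K \<inter> S. E i k" using cds_neighbour_in_clique by blast
next
  assume nb: "\<forall>i\<in>I. \<exists>k\<in>K \<inter> S. E i k"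
  have "I \<noteq> {}" using not_clique clique partition by auto
  then obtain k where k: "k \<in> S \<inter> K" using nb by blast
  have "connected_on S E"
    using assms partition nb by (intro connected_on_clique_hub[OF sym clique k]) blast
  moreover have "\<exists>u\<in>S. E v u" if "v \<in> U - S" for v
  proof (cases "v \<in> I")
    case True
    then show ?thesis using nb by blast
  next
    case False
    then have "E v k" using that k partition clique unfolding is_clique_def by auto
    then show ?thesis using k by blast
  qed
  ultimately show "connected_dominating_set U E S"
    unfolding connected_dominating_set_def using assms by blast
qed

end

lemma connected_domishold_if_threshold_function:
  assumes "finite U" and "K \<subseteq> U" and th: "threshold_function K P"
    and cds: "\<And>S. S \<subseteq> U \<Longrightarrow> connected_dominating_set U E S \<longleftrightarrow> P (S \<inter> K)"
  shows "connected_domishold U E"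
proof -
  obtain w :: "'a \<Rightarrow> nat" and t where wt: "\<And>X. X \<subseteq> K \<Longrightarrow> P X \<longleftrightarrow> t \<le> sum w X"
    using th by (metis threshold_functionE)
  define w' where "w' = (\<lambda>v. if v \<in> K then real (w v) else 0)"
  have sum_w': "sum w' S = real (sum w (S \<inter> K))" if "S \<subseteq> U" for S
  proof -
    have "finite S" using that \<open>finite U\<close> finite_subset by blast
    then have "sum w' S = sum w' (S \<inter> K) + sum w' (S - K)" by (rule sum.Int_Diff)
    then show ?thesis unfolding w'_def by simp
  qed
  have threshold: "real t \<le> sum w' S \<longleftrightarrow> connected_dominating_set U E S" if "S \<subseteq> U" for S
  proof -
    have "real t \<le> sum w' S \<longleftrightarrow> t \<le> sum w (S \<inter> K)" unfolding sum_w'[OF that] by (rule of_nat_le_iff)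
    also have "\<dots> \<longleftrightarrow> P (S \<inter> K)" using wt[of "S \<inter> K"] by simp
    finally show ?thesis using cds[OF that] by simp
  qed
  show ?thesis unfolding connected_domishold_def
  proof (intro disjI2 exI[of _ w'] exI[of _ "real t"] conjI allI impI)
    show "\<forall>x\<in>U. 0 \<le> w' x" unfolding w'_def by simp
  qed (simp_all add: threshold)
qed

theorem split_F2_free_connected_domishold:
  assumes "simple_graph U E" and "split_graph U E" and "F2_free U E"
  shows "connected_domishold U E"
proof -
  have fin: "finite U" and sym: "\<forall>x y. E x y \<longrightarrow> E y x" and irr: "\<forall>x. \<not> E x x"
    using assms(1) unfolding simple_graph_def by auto
  obtain K I where partition: "K \<inter> I = {}" "K \<union> I = U"
    and clique: "is_clique K E" and independent: "is_independent I E"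
    using assms(2) unfolding split_graph_def by blast
  show ?thesis
  proof (cases "is_clique U E")
    case True
    then show ?thesis using fin sym by (rule clique_connected_domishold[rotated 2])
  next
    case False
    let ?N = "\<lambda>i. {k \<in> K. E i k}"
    have "finite K" using fin partition by auto
    moreover have "almost_comparable (?N ` I)"
      using assms(3) partition \<open>finite K\<close> unfolding F2_free_def
      by (intro almost_comparable_neighbourhoods[OF sym irr clique independent]) auto
    ultimately have "threshold_function K (\<lambda>X. \<exists>A\<in>?N ` I. A \<subseteq> X)"
      by (intro almost_comparable_threshold_function) auto
    then have "threshold_function K (\<lambda>X. \<not> (\<exists>A\<in>?N ` I. A \<subseteq> K - X))"
      using \<open>finite K\<close> by (intro threshold_function_dual)
    moreover have "connected_dominating_set U E S \<longleftrightarrow> \<not> (\<exists>A\<in>?N ` I. A \<subseteq> K - S \<inter> K)"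
      if "S \<subseteq> U" for S
    proof -
      have "connected_dominating_set U E S \<longleftrightarrow> (\<forall>i\<in>I. \<exists>k\<in>K \<inter> S. E i k)"
        using sym partition clique independent False that by (rule cds_iff_clique_neighbours)
      also have "\<dots> \<longleftrightarrow> \<not> (\<exists>A\<in>?N ` I. A \<subseteq> K - S \<inter> K)" by auto
      finally show ?thesis .
    qed
    ultimately show ?thesis using fin partition
      by (intro connected_domishold_if_threshold_function[of U K]) auto
  qed
qed

theorem mainTheorem12:
  fixes V :: "'a set" and E :: "'a \<Rightarrow> 'a \<Rightarrow> bool"
  assumes "simple_graph V E" and "split_graph V E" and "F2_free V E"
  shows "hereditarily_connected_domishold V E"
  unfolding hereditarily_connected_domishold_def
proof (intro allI impI)
  fix U assume "U \<subseteq> V"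
  show "connected_domishold U E"
    by (rule split_F2_free_connected_domishold[OF simple_graph_subset[OF assms(1) \<open>U \<subseteq> V\<close>]
          split_graph_subset[OF assms(2) \<open>U \<subseteq> V\<close>] F2_free_subset[OF assms(3) \<open>U \<subseteq> V\<close>]])
qed

end
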